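(* Let $\oplus$ be the functor from $\textnormal{\textbf{Conv}}\times\textnormal{\textbf{Conv}}$ to $\textnormal{\textbf{Conv}}$ which takes pairs of Euclidean spaces $(\mathbb{R}^n,\mathbb{R}^m)$ to their direct sum $\mathbb{R}^n\oplus \mathbb{R}^m$ and takes pairs of bifunctions ($F$ from $\mathbb{R}^m$ to $\mathbb{R}^n$, $G$ from $\mathbb{R}^p$ to $\mathbb{R}^q$) to their pointwise sum, i.e., the bifunction $F\oplus G$ from $\mathbb{R}^m\oplus\mathbb{R}^p$ to $\mathbb{R}^n\oplus\mathbb{R}^q$ given by \begin{multline*} (F\oplus G)((u,y),(x,z)) = F(u,x) + G(y,z) \\ \text{ for all } u\in\mathbb{R}^m,x\in\mathbb{R}^n,y\in\mathbb{R}^p, \textnormal{and } z\in\mathbb{R}^q. \end{multline*} Then $(\textnormal{\textbf{Conv}}, \oplus, \mathbb{R}^0)$ is a strict symmetric monoidal category.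
   Context: $\textnormal{\textbf{Conv}}$ is the category whose objects are Euclidean spaces, whose morphisms from $\mathbb{R}^m$ to $\mathbb{R}^n$ are convex bifunctions, i.e., jointly convex functions $F\colon\mathbb{R}^m\times\mathbb{R}^n\to\mathbb{R}\cup\{\pm\infty\}$, with identity $\mathrm{id}_X(x,x')=0$ if $x=x'$ and $+\infty$ otherwise, and composition $(G\circ F)(u,y)=\inf_{x}\{F(u,x)+G(x,y)\}$. *)

theory Defs
  imports "HOL-Analysis.Analysis"
begin

text \<open>Hom a b is the set of morphisms
from a to b; cmp a b c f g is g after f (f : a -> b, g : b -> c);
otimes is the tensor on objects, tm a b c d f g is the tensor of f : a -> b and
g : c -> d; I is the unit object; brd a b : otimes a b -> otimes b a is the braiding.\<close>

definition strict_sym_monoidal_cat ::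
  "('o \<Rightarrow> 'o \<Rightarrow> 'm set) \<Rightarrow> ('o \<Rightarrow> 'm) \<Rightarrow> ('o \<Rightarrow> 'o \<Rightarrow> 'o \<Rightarrow> 'm \<Rightarrow> 'm \<Rightarrow> 'm)
   \<Rightarrow> ('o \<Rightarrow> 'o \<Rightarrow> 'o) \<Rightarrow> ('o \<Rightarrow> 'o \<Rightarrow> 'o \<Rightarrow> 'o \<Rightarrow> 'm \<Rightarrow> 'm \<Rightarrow> 'm) \<Rightarrow> 'o
   \<Rightarrow> ('o \<Rightarrow> 'o \<Rightarrow> 'm) \<Rightarrow> bool" where
  "strict_sym_monoidal_cat Hom idm cmp otimes tm I brd \<longleftrightarrow>
    \<comment> \<open>category\<close>
    (\<forall>a. idm a \<in> Hom a a) \<and>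
    (\<forall>a b c f g. f \<in> Hom a b \<longrightarrow> g \<in> Hom b c \<longrightarrow> cmp a b c f g \<in> Hom a c) \<and>
    (\<forall>a b f. f \<in> Hom a b \<longrightarrow> cmp a a b (idm a) f = f \<and> cmp a b b f (idm b) = f) \<and>
    (\<forall>a b c d f g h. f \<in> Hom a b \<longrightarrow> g \<in> Hom b c \<longrightarrow> h \<in> Hom c d \<longrightarrow>
        cmp a c d (cmp a b c f g) h = cmp a b d f (cmp b c d g h)) \<and>
    \<comment> \<open>tensor is a bifunctor\<close>
    (\<forall>a b c d f g. f \<in> Hom a b \<longrightarrow> g \<in> Hom c d \<longrightarrow> tm a b c d f g \<in> Hom (otimes a c) (otimes b d)) \<and>
    (\<forall>a c. tm a a c c (idm a) (idm c) = idm (otimes a c)) \<and>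
    (\<forall>a b c a' b' c' f g f' g'. f \<in> Hom a b \<longrightarrow> g \<in> Hom b c \<longrightarrow> f' \<in> Hom a' b' \<longrightarrow> g' \<in> Hom b' c' \<longrightarrow>
        tm a c a' c' (cmp a b c f g) (cmp a' b' c' f' g') =
        cmp (otimes a a') (otimes b b') (otimes c c') (tm a b a' b' f f') (tm b c b' c' g g')) \<and>
    \<comment> \<open>strict monoidal: associativity and unit hold on the nose\<close>
    (\<forall>a b c. otimes (otimes a b) c = otimes a (otimes b c)) \<and>
    (\<forall>a. otimes I a = a \<and> otimes a I = a) \<and>
    (\<forall>a b c d e e' f g h. f \<in> Hom a b \<longrightarrow> g \<in> Hom c d \<longrightarrow> h \<in> Hom e e' \<longrightarrow>
        tm (otimes a c) (otimes b d) e e' (tm a b c d f g) h = tm a b (otimes c e) (otimes d e') f (tm c d e e' g h)) \<and>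
    (\<forall>a b f. f \<in> Hom a b \<longrightarrow> tm I I a b (idm I) f = f \<and> tm a b I I f (idm I) = f) \<and>
    \<comment> \<open>symmetry\<close>
    (\<forall>a b. brd a b \<in> Hom (otimes a b) (otimes b a)) \<and>
    (\<forall>a a' b b' f g. f \<in> Hom a a' \<longrightarrow> g \<in> Hom b b' \<longrightarrow>
        cmp (otimes a b) (otimes a' b') (otimes b' a') (tm a a' b b' f g) (brd a' b') =
        cmp (otimes a b) (otimes b a) (otimes b' a') (brd a b) (tm b b' a a' g f)) \<and>
    (\<forall>a b. cmp (otimes a b) (otimes b a) (otimes a b) (brd a b) (brd b a) = idm (otimes a b)) \<and>
    (\<forall>a b c. brd a (otimes b c) =
        cmp (otimes a (otimes b c)) (otimes b (otimes a c)) (otimes b (otimes c a))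
          (tm (otimes a b) (otimes b a) c c (brd a b) (idm c)) (tm b b (otimes a c) (otimes c a) (idm b) (brd a c))) \<and>
    (\<forall>a b c. brd (otimes a b) c =
        cmp (otimes a (otimes b c)) (otimes a (otimes c b)) (otimes c (otimes a b))
          (tm a a (otimes b c) (otimes c b) (idm a) (brd b c)) (tm (otimes a c) (otimes c a) b b (brd a c) (idm b)))"

text \<open>The Euclidean space R^n is represented by real lists of length n, so the direct
sum R^n (+) R^m is list concatenation (a list of length n+m) and R^0 = {[]}.
A morphism from R^m to R^n is a bifunction F : R^m x R^n -> ereal; outside the
carrier it takes the fixed value undefined (extensionality), so that morphisms
can be compared by equality.  Addition on ereal satisfies inf + (-inf) = inf.\<close>

definition lcomb :: "real \<Rightarrow> real list \<Rightarrow> real list \<Rightarrow> real list" where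
  "lcomb l v w = map2 (\<lambda>a b. l * a + (1 - l) * b) v w"

text \<open>Joint convexity of an extended-real valued bifunction: convexity of its
epigraph {((u,x),t). t real, F u x <= t} in R^m x R^n x R, unfolded.\<close>
definition convex_bifunction :: "nat \<Rightarrow> nat \<Rightarrow> (real list \<Rightarrow> real list \<Rightarrow> ereal) \<Rightarrow> bool" where
  "convex_bifunction m n F \<longleftrightarrow>
    (\<forall>u1 x1 u2 x2 (t1::real) (t2::real) (l::real).
      length u1 = m \<longrightarrow> length u2 = m \<longrightarrow> length x1 = n \<longrightarrow> length x2 = n \<longrightarrow>
      0 \<le> l \<longrightarrow> l \<le> 1 \<longrightarrow> F u1 x1 \<le> ereal t1 \<longrightarrow> F u2 x2 \<le> ereal t2 \<longrightarrow>
      F (lcomb l u1 u2) (lcomb l x1 x2) \<le> ereal (l * t1 + (1 - l) * t2))"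

definition conv_restrict :: "nat \<Rightarrow> nat \<Rightarrow> (real list \<Rightarrow> real list \<Rightarrow> ereal) \<Rightarrow> real list \<Rightarrow> real list \<Rightarrow> ereal" where
  "conv_restrict m n F = (\<lambda>u x. if length u = m \<and> length x = n then F u x else undefined)"

definition conv_hom :: "nat \<Rightarrow> nat \<Rightarrow> (real list \<Rightarrow> real list \<Rightarrow> ereal) set" where
  "conv_hom m n = {F. convex_bifunction m n F \<and>
     (\<forall>u x. \<not> (length u = m \<and> length x = n) \<longrightarrow> F u x = undefined)}"

definition conv_id :: "nat \<Rightarrow> real list \<Rightarrow> real list \<Rightarrow> ereal" where
  "conv_id n = conv_restrict n n (\<lambda>x x'. if x = x' then 0 else \<infinity>)"

definition conv_comp :: "nat \<Rightarrow> nat \<Rightarrow> nat \<Rightarrow> (real list \<Rightarrow> real list \<Rightarrow> ereal)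
    \<Rightarrow> (real list \<Rightarrow> real list \<Rightarrow> ereal) \<Rightarrow> real list \<Rightarrow> real list \<Rightarrow> ereal" where
  "conv_comp m n p F G = conv_restrict m p (\<lambda>u y. INF x\<in>{x. length x = n}. F u x + G x y)"

definition conv_tensor :: "nat \<Rightarrow> nat \<Rightarrow> nat \<Rightarrow> nat \<Rightarrow> (real list \<Rightarrow> real list \<Rightarrow> ereal)
    \<Rightarrow> (real list \<Rightarrow> real list \<Rightarrow> ereal) \<Rightarrow> real list \<Rightarrow> real list \<Rightarrow> ereal" where
  "conv_tensor m n p q F G = conv_restrict (m + p) (n + q)
     (\<lambda>w v. F (take m w) (take n v) + G (drop m w) (drop n v))"

definition conv_sigma :: "nat \<Rightarrow> nat \<Rightarrow> real list \<Rightarrow> real list \<Rightarrow> ereal" where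
  "conv_sigma n m = conv_restrict (n + m) (m + n)
     (\<lambda>w v. if v = drop n w @ take n w then 0 else \<infinity>)"

end

(*
  Composition in Conv is an infimal convolution.  It preserves joint convexity because
  near-optimal intermediate points for two pairs of arguments can be combined convexly, and
  associativity and the interchange law are exchanges of infima; in ereal, where
  \<infinity> + -\<infinity> = \<infinity>, adding a constant commutes with infima over nonempty sets
  without any sign condition.  Identities and braidings are indicator bifunctions of graphs
  of linear maps, and composing with such an indicator is substitution, so every law
  involving them reduces to an identity between maps of lists.  Strictness is on the nose,
  since the direct sum is list concatenation.
*)

theory Submission
  imports Defs
begin

section \<open>Infima of extended reals\<close>

text \<open>Unlike \<open>INF_ereal_add_left\<close>, this needs no sign conditions on \<open>f\<close> or \<open>c\<close>.\<close>

lemma INF_add_const_ereal: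
  fixes f :: "'a \<Rightarrow> ereal"
  assumes "S \<noteq> {}"
  shows "(INF x\<in>S. f x) + c = (INF x\<in>S. f x + c)"
proof (rule antisym)
  show "(INF x\<in>S. f x) + c \<le> (INF x\<in>S. f x + c)"
    by (rule INF_greatest) (intro add_right_mono INF_lower)
next
  show "(INF x\<in>S. f x + c) \<le> (INF x\<in>S. f x) + c"
  proof (cases c)
    case (real r)
    have "(INF x\<in>S. f x + c) - c \<le> (INF x\<in>S. f x)"
    proof (rule INF_greatest)
      fix x assume "x \<in> S"
      then have "(INF x\<in>S. f x + c) \<le> f x + c" by (rule INF_lower)
      then show "(INF x\<in>S. f x + c) - c \<le> f x"
        using real by (simp add: ereal_minus_le_iff)
    qed
    then have "(INF x\<in>S. f x + c) - c + c \<le> (INF x\<in>S. f x) + c"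
      by (rule add_right_mono)
    then show ?thesis
      using real by (cases "INF x\<in>S. f x + c") auto
  next
    case PInf
    then show ?thesis by simp
  next
    case MInf
    show ?thesis
    proof (cases "(INF x\<in>S. f x) = \<infinity>")
      case True
      then show ?thesis using MInf by simp
    next
      case False
      then have "(INF x\<in>S. f x) < \<infinity>" by (simp add: less_le)
      then obtain x where x: "x \<in> S" "f x < \<infinity>"
        unfolding INF_less_iff by blast
      then have "f x + c = -\<infinity>" using MInf by (cases "f x") auto
      then have "(INF x\<in>S. f x + c) = -\<infinity>"
        using INF_lower[OF x(1), of "\<lambda>x. f x + c"] by (metis ereal_infty_less_eq2(2))
      then show ?thesis by simp
    qed
  qed
qed

lemma INF_const_add_ereal:
  fixes f :: "'a \<Rightarrow> ereal"
  assumes "S \<noteq> {}"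
  shows "c + (INF x\<in>S. f x) = (INF x\<in>S. c + f x)"
  using INF_add_const_ereal[OF assms, of f c] by (simp add: add.commute)

lemma ereal_add_le_realE:
  fixes A B :: ereal
  assumes "A + B \<le> ereal t"
  obtains s r where "A \<le> ereal s" "B \<le> ereal r" "s + r = t"
proof (cases A)
  case (real x)
  with assms have "B \<le> ereal (t - x)" by (cases B) auto
  with real show ?thesis by (intro that[of x "t - x"]) auto
next
  case PInf
  with assms show ?thesis by simp
next
  case MInf
  show ?thesis
  proof (cases B)
    case (real y)
    with MInf show ?thesis by (intro that[of "t - y" y]) auto
  next
    case PInf
    with assms MInf show ?thesis by simp
  next
    case MInf
    with \<open>A = -\<infinity>\<close> show ?thesis by (intro that[of t 0]) auto
  qed
qed

lemma ereal_add_le_convex_combination: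
  fixes A B :: ereal
  assumes "A \<le> ereal (l * s1 + (1 - l) * s2)" "B \<le> ereal (l * r1 + (1 - l) * r2)"
  shows "A + B \<le> ereal (l * (s1 + r1) + (1 - l) * (s2 + r2))"
proof -
  have "A + B \<le> ereal (l * s1 + (1 - l) * s2) + ereal (l * r1 + (1 - l) * r2)"
    using assms by (rule add_mono)
  then show ?thesis by (simp add: algebra_simps)
qed

lemma INF_indicator_add:
  fixes g :: "'a \<Rightarrow> ereal"
  assumes "x0 \<in> S" "\<And>x. x \<in> S \<Longrightarrow> P x \<longleftrightarrow> x = x0"
  shows "(INF x\<in>S. (if P x then 0 else \<infinity>) + g x) = g x0"
proof (rule antisym)
  show "(INF x\<in>S. (if P x then 0 else \<infinity>) + g x) \<le> g x0"
    using INF_lower[OF assms(1), of "\<lambda>x. (if P x then 0 else \<infinity>) + g x"] assms by simp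
  show "g x0 \<le> (INF x\<in>S. (if P x then 0 else \<infinity>) + g x)"
    by (rule INF_greatest) (use assms in auto)
qed

lemma INF_add_indicator:
  fixes g :: "'a \<Rightarrow> ereal"
  assumes "x0 \<in> S" "\<And>x. x \<in> S \<Longrightarrow> P x \<longleftrightarrow> x = x0"
  shows "(INF x\<in>S. g x + (if P x then 0 else \<infinity>)) = g x0"
  using INF_indicator_add[OF assms, of g] by (simp add: add.commute)

lemma lists_of_length_nonempty: "{x :: 'a list. length x = n} \<noteq> {}"
  by (metis (mono_tags) empty_iff length_replicate mem_Collect_eq)

lemma INF_lists_of_length_append:
  fixes P :: "'a list \<Rightarrow> 'a list \<Rightarrow> 'b :: complete_lattice"
  shows "(INF y\<in>{y. length y = n + m}. P (take n y) (drop n y)) =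
    (INF x\<in>{x. length x = n}. INF x'\<in>{x'. length x' = m}. P x x')"
proof (rule antisym)
  show "(INF y\<in>{y. length y = n + m}. P (take n y) (drop n y)) \<le>
      (INF x\<in>{x. length x = n}. INF x'\<in>{x'. length x' = m}. P x x')"
  proof (intro INF_greatest)
    fix x x' :: "'a list" assume "x \<in> {x. length x = n}" "x' \<in> {x'. length x' = m}"
    then show "(INF y\<in>{y. length y = n + m}. P (take n y) (drop n y)) \<le> P x x'"
      using INF_lower[of "x @ x'" "{y. length y = n + m}" "\<lambda>y. P (take n y) (drop n y)"] by simp
  qed
  show "(INF x\<in>{x. length x = n}. INF x'\<in>{x'. length x' = m}. P x x') \<le>
      (INF y\<in>{y. length y = n + m}. P (take n y) (drop n y))"
  proof (rule INF_greatest)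
    fix y :: "'a list" assume "y \<in> {y. length y = n + m}"
    then show "(INF x\<in>{x. length x = n}. INF x'\<in>{x'. length x' = m}. P x x')
        \<le> P (take n y) (drop n y)"
      by (intro INF_lower2[of "take n y"] INF_lower2[of "drop n y"]) auto
  qed
qed

section \<open>Lists as vectors\<close>

lemma split_list3:
  assumes "length w = a + b + c"
  obtains p q r where "w = p @ q @ r" "length p = a" "length q = b" "length r = c"
proof
  show "w = take a w @ take b (drop a w) @ drop b (drop a w)"
    by (simp only: append_take_drop_id)
qed (use assms in auto)

lemma length_lcomb [simp]: "length (lcomb l v w) = min (length v) (length w)"
  by (simp add: lcomb_def)

lemma take_lcomb: "take n (lcomb l v w) = lcomb l (take n v) (take n w)"
  by (simp add: lcomb_def take_map take_zip)

lemma drop_lcomb: "drop n (lcomb l v w) = lcomb l (drop n v) (drop n w)"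
  by (simp add: lcomb_def drop_map drop_zip)

lemma lcomb_append:
  "length a = length c \<Longrightarrow> lcomb l (a @ b) (c @ d) = lcomb l a c @ lcomb l b d"
  by (simp add: lcomb_def zip_append)

section \<open>Composition and direct sum of bifunctions\<close>

lemma conv_restrict_cong:
  "(\<And>u x. length u = m \<Longrightarrow> length x = n \<Longrightarrow> F u x = G u x) \<Longrightarrow>
    conv_restrict m n F = conv_restrict m n G"
  by (auto simp: conv_restrict_def intro!: ext)

lemma conv_restrict_in_hom:
  "convex_bifunction m n F \<Longrightarrow> conv_restrict m n F \<in> conv_hom m n"
  by (auto simp: conv_hom_def convex_bifunction_def conv_restrict_def)

lemma conv_hom_restrict: "F \<in> conv_hom m n \<Longrightarrow> conv_restrict m n F = F"
  by (auto simp: conv_hom_def conv_restrict_def intro!: ext)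

lemma conv_hom_convex: "F \<in> conv_hom m n \<Longrightarrow> convex_bifunction m n F"
  by (simp add: conv_hom_def)

lemma convex_bifunctionD:
  assumes "convex_bifunction m n F" "length u1 = m" "length u2 = m" "length x1 = n" "length x2 = n"
    "0 \<le> l" "l \<le> 1" "F u1 x1 \<le> ereal t1" "F u2 x2 \<le> ereal t2"
  shows "F (lcomb l u1 u2) (lcomb l x1 x2) \<le> ereal (l * t1 + (1 - l) * t2)"
  using assms unfolding convex_bifunction_def by blast

lemma conv_tensor_in_hom:
  assumes F: "F \<in> conv_hom m n" and G: "G \<in> conv_hom p q"
  shows "conv_tensor m n p q F G \<in> conv_hom (m + p) (n + q)"
  unfolding conv_tensor_def
proof (intro conv_restrict_in_hom, unfold convex_bifunction_def, intro allI impI)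
  fix u1 x1 u2 x2 :: "real list" and t1 t2 l :: real
  assume len: "length u1 = m + p" "length u2 = m + p" "length x1 = n + q" "length x2 = n + q"
    and l: "0 \<le> l" "l \<le> 1"
    and le1: "F (take m u1) (take n x1) + G (drop m u1) (drop n x1) \<le> ereal t1"
    and le2: "F (take m u2) (take n x2) + G (drop m u2) (drop n x2) \<le> ereal t2"
  obtain s1 r1 where 1: "F (take m u1) (take n x1) \<le> ereal s1" "G (drop m u1) (drop n x1) \<le> ereal r1"
    "s1 + r1 = t1"
    using le1 by (rule ereal_add_le_realE)
  obtain s2 r2 where 2: "F (take m u2) (take n x2) \<le> ereal s2" "G (drop m u2) (drop n x2) \<le> ereal r2"
    "s2 + r2 = t2"
    using le2 by (rule ereal_add_le_realE)
  have "F (lcomb l (take m u1) (take m u2)) (lcomb l (take n x1) (take n x2))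
      \<le> ereal (l * s1 + (1 - l) * s2)"
    by (rule convex_bifunctionD[OF conv_hom_convex[OF F]]) (use len l 1 2 in auto)
  moreover have "G (lcomb l (drop m u1) (drop m u2)) (lcomb l (drop n x1) (drop n x2))
      \<le> ereal (l * r1 + (1 - l) * r2)"
    by (rule convex_bifunctionD[OF conv_hom_convex[OF G]]) (use len l 1 2 in auto)
  ultimately show "F (take m (lcomb l u1 u2)) (take n (lcomb l x1 x2)) +
      G (drop m (lcomb l u1 u2)) (drop n (lcomb l x1 x2)) \<le> ereal (l * t1 + (1 - l) * t2)"
    unfolding take_lcomb drop_lcomb 1(3)[symmetric] 2(3)[symmetric]
    by (rule ereal_add_le_convex_combination)
qed

lemma conv_comp_in_hom:
  assumes F: "F \<in> conv_hom m n" and G: "G \<in> conv_hom n p"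
  shows "conv_comp m n p F G \<in> conv_hom m p"
  unfolding conv_comp_def
proof (intro conv_restrict_in_hom, unfold convex_bifunction_def, intro allI impI)
  fix u1 y1 u2 y2 :: "real list" and t1 t2 l :: real
  let ?N = "{x :: real list. length x = n}"
  assume len: "length u1 = m" "length u2 = m" "length y1 = p" "length y2 = p"
    and l: "0 \<le> l" "l \<le> 1"
    and le1: "(INF x\<in>?N. F u1 x + G x y1) \<le> ereal t1"
    and le2: "(INF x\<in>?N. F u2 x + G x y2) \<le> ereal t2"
  show "(INF x\<in>?N. F (lcomb l u1 u2) x + G x (lcomb l y1 y2)) \<le> ereal (l * t1 + (1 - l) * t2)"
  proof (rule ereal_le_epsilon2)
    fix e :: real assume "0 < e"
    then have "(INF x\<in>?N. F u1 x + G x y1) < ereal (t1 + e)"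
      "(INF x\<in>?N. F u2 x + G x y2) < ereal (t2 + e)"
      using le1 le2 by (auto intro: le_less_trans)
    then obtain x1 x2 where x1: "length x1 = n" "F u1 x1 + G x1 y1 < ereal (t1 + e)"
      and x2: "length x2 = n" "F u2 x2 + G x2 y2 < ereal (t2 + e)"
      unfolding INF_less_iff mem_Collect_eq by blast
    obtain s1 r1 where 1: "F u1 x1 \<le> ereal s1" "G x1 y1 \<le> ereal r1" "s1 + r1 = t1 + e"
      using less_imp_le[OF x1(2)] by (rule ereal_add_le_realE)
    obtain s2 r2 where 2: "F u2 x2 \<le> ereal s2" "G x2 y2 \<le> ereal r2" "s2 + r2 = t2 + e"
      using less_imp_le[OF x2(2)] by (rule ereal_add_le_realE)
    have "F (lcomb l u1 u2) (lcomb l x1 x2) \<le> ereal (l * s1 + (1 - l) * s2)"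
      by (rule convex_bifunctionD[OF conv_hom_convex[OF F]]) (use len l 1 2 x1 x2 in simp_all)
    moreover have "G (lcomb l x1 x2) (lcomb l y1 y2) \<le> ereal (l * r1 + (1 - l) * r2)"
      by (rule convex_bifunctionD[OF conv_hom_convex[OF G]]) (use len l 1 2 x1 x2 in simp_all)
    ultimately have "F (lcomb l u1 u2) (lcomb l x1 x2) + G (lcomb l x1 x2) (lcomb l y1 y2)
        \<le> ereal (l * (t1 + e) + (1 - l) * (t2 + e))"
      unfolding 1(3)[symmetric] 2(3)[symmetric] by (rule ereal_add_le_convex_combination)
    moreover have "(INF x\<in>?N. F (lcomb l u1 u2) x + G x (lcomb l y1 y2))
        \<le> F (lcomb l u1 u2) (lcomb l x1 x2) + G (lcomb l x1 x2) (lcomb l y1 y2)"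
      by (rule INF_lower) (simp add: x1 x2)
    moreover have "l * (t1 + e) + (1 - l) * (t2 + e) = (l * t1 + (1 - l) * t2) + e"
      by algebra
    ultimately show "(INF x\<in>?N. F (lcomb l u1 u2) x + G x (lcomb l y1 y2))
        \<le> ereal (l * t1 + (1 - l) * t2) + ereal e"
      by simp
  qed
qed

lemma conv_comp_assoc:
  "conv_comp a c d (conv_comp a b c f g) h = conv_comp a b d f (conv_comp b c d g h)"
  unfolding conv_comp_def
proof (rule conv_restrict_cong)
  fix u z :: "real list" assume "length u = a" "length z = d"
  let ?B = "{x :: real list. length x = b}" and ?C = "{y :: real list. length y = c}"
  have "(INF y\<in>?C. conv_restrict a c (\<lambda>u y. INF x\<in>?B. f u x + g x y) u y + h y z)
      = (INF y\<in>?C. (INF x\<in>?B. f u x + g x y) + h y z)"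
    using \<open>length u = a\<close> by (intro INF_cong) (auto simp: conv_restrict_def)
  also have "\<dots> = (INF y\<in>?C. INF x\<in>?B. f u x + g x y + h y z)"
    by (intro INF_cong INF_add_const_ereal lists_of_length_nonempty refl)
  also have "\<dots> = (INF x\<in>?B. INF y\<in>?C. f u x + (g x y + h y z))"
    by (subst INF_commute) (simp add: add.assoc)
  also have "\<dots> = (INF x\<in>?B. f u x + (INF y\<in>?C. g x y + h y z))"
    by (intro INF_cong INF_const_add_ereal[symmetric] lists_of_length_nonempty refl)
  also have "\<dots> = (INF x\<in>?B. f u x + conv_restrict b d (\<lambda>x z. INF y\<in>?C. g x y + h y z) x z)"
    using \<open>length z = d\<close> by (intro INF_cong) (auto simp: conv_restrict_def)
  finally show "(INF y\<in>?C. conv_restrict a c (\<lambda>u y. INF x\<in>?B. f u x + g x y) u y + h y z)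
      = (INF x\<in>?B. f u x + conv_restrict b d (\<lambda>x z. INF y\<in>?C. g x y + h y z) x z)" .
qed

lemma conv_tensor_comp:
  "conv_tensor a c a' c' (conv_comp a b c f g) (conv_comp a' b' c' f' g') =
    conv_comp (a + a') (b + b') (c + c') (conv_tensor a b a' b' f f') (conv_tensor b c b' c' g g')"
  unfolding conv_tensor_def conv_comp_def
proof (rule conv_restrict_cong)
  fix w v :: "real list" assume len: "length w = a + a'" "length v = c + c'"
  let ?B = "{x :: real list. length x = b}" and ?B' = "{x :: real list. length x = b'}"
  let ?P = "\<lambda>x x'. (f (take a w) x + f' (drop a w) x') + (g x (take c v) + g' x' (drop c v))"
  have "conv_restrict a c (\<lambda>u y. INF x\<in>?B. f u x + g x y) (take a w) (take c v) +
      conv_restrict a' c' (\<lambda>u y. INF x\<in>?B'. f' u x + g' x y) (drop a w) (drop c v)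
      = (INF x\<in>?B. f (take a w) x + g x (take c v)) + (INF x'\<in>?B'. f' (drop a w) x' + g' x' (drop c v))"
    using len by (simp add: conv_restrict_def)
  also have "\<dots> = (INF x\<in>?B. (f (take a w) x + g x (take c v)) +
      (INF x'\<in>?B'. f' (drop a w) x' + g' x' (drop c v)))"
    by (rule INF_add_const_ereal[OF lists_of_length_nonempty])
  also have "\<dots> = (INF x\<in>?B. INF x'\<in>?B'. ?P x x')"
    by (rule INF_cong[OF refl], subst INF_const_add_ereal[OF lists_of_length_nonempty])
      (simp add: ac_simps)
  also have "\<dots> = (INF y\<in>{y. length y = b + b'}. ?P (take b y) (drop b y))"
    by (rule INF_lists_of_length_append[symmetric])
  also have "\<dots> = (INF y\<in>{y. length y = b + b'}.
      conv_restrict (a + a') (b + b') (\<lambda>w y. f (take a w) (take b y) + f' (drop a w) (drop b y)) w y +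
      conv_restrict (b + b') (c + c') (\<lambda>y v. g (take b y) (take c v) + g' (drop b y) (drop c v)) y v)"
    using len by (intro INF_cong) (auto simp: conv_restrict_def)
  finally show "conv_restrict a c (\<lambda>u y. INF x\<in>?B. f u x + g x y) (take a w) (take c v) +
      conv_restrict a' c' (\<lambda>u y. INF x\<in>?B'. f' u x + g' x y) (drop a w) (drop c v) =
    (INF y\<in>{y. length y = b + b'}.
      conv_restrict (a + a') (b + b') (\<lambda>w y. f (take a w) (take b y) + f' (drop a w) (drop b y)) w y +
      conv_restrict (b + b') (c + c') (\<lambda>y v. g (take b y) (take c v) + g' (drop b y) (drop c v)) y v)" .
qed

lemma conv_tensor_assoc:
  "conv_tensor (a + c) (b + d) e e' (conv_tensor a b c d f g) h =
    conv_tensor a b (c + e) (d + e') f (conv_tensor c d e e' g h)"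
  unfolding conv_tensor_def add.assoc
proof (rule conv_restrict_cong)
  fix w v :: "real list" assume "length w = a + (c + e)" "length v = b + (d + e')"
  moreover obtain p q r where "w = p @ q @ r" "length p = a" "length q = c" "length r = e"
    using split_list3[of w a c e] \<open>length w = a + (c + e)\<close> by (auto simp: add.assoc)
  moreover obtain x y z where "v = x @ y @ z" "length x = b" "length y = d" "length z = e'"
    using split_list3[of v b d e'] \<open>length v = b + (d + e')\<close> by (auto simp: add.assoc)
  ultimately show "conv_restrict (a + c) (b + d) (\<lambda>w v. f (take a w) (take b v) + g (drop a w) (drop b v))
        (take (a + c) w) (take (b + d) v) + h (drop (a + c) w) (drop (b + d) v) =
      f (take a w) (take b v) + conv_restrict (c + e) (d + e')
        (\<lambda>w v. g (take c w) (take d v) + h (drop c w) (drop d v)) (drop a w) (drop b v)"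
    by (simp add: conv_restrict_def add.assoc)
qed

lemma conv_tensor_unit:
  assumes "f \<in> conv_hom a b"
  shows "conv_tensor 0 0 a b (conv_id 0) f = f" "conv_tensor a b 0 0 f (conv_id 0) = f"
proof -
  have "conv_tensor 0 0 a b (conv_id 0) f = conv_restrict a b f"
    "conv_tensor a b 0 0 f (conv_id 0) = conv_restrict a b f"
    unfolding conv_tensor_def add_0 add_0_right
    by (auto intro!: conv_restrict_cong simp: conv_id_def conv_restrict_def[of 0 0])
  with conv_hom_restrict[OF assms] show "conv_tensor 0 0 a b (conv_id 0) f = f"
    "conv_tensor a b 0 0 f (conv_id 0) = f"
    by simp_all
qed

section \<open>Indicators of graphs: identities and braidings\<close>

definition conv_graph ::
    "nat \<Rightarrow> nat \<Rightarrow> (real list \<Rightarrow> real list) \<Rightarrow> real list \<Rightarrow> real list \<Rightarrow> ereal"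
  where "conv_graph m n h = conv_restrict m n (\<lambda>u x. if x = h u then 0 else \<infinity>)"

lemma conv_graph_cong:
  "(\<And>u. length u = m \<Longrightarrow> h u = h' u) \<Longrightarrow> conv_graph m n h = conv_graph m n h'"
  unfolding conv_graph_def by (rule conv_restrict_cong) simp

lemma conv_graph_in_hom:
  assumes "\<And>l u1 u2. length u1 = m \<Longrightarrow> length u2 = m \<Longrightarrow>
    h (lcomb l u1 u2) = lcomb l (h u1) (h u2)"
  shows "conv_graph m n h \<in> conv_hom m n"
  unfolding conv_graph_def
proof (intro conv_restrict_in_hom, unfold convex_bifunction_def, intro allI impI)
  fix u1 x1 u2 x2 :: "real list" and t1 t2 l :: real
  assume "length u1 = m" "length u2 = m" "0 \<le> l" "l \<le> 1"
    and "(if x1 = h u1 then 0 else \<infinity>) \<le> ereal t1"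
      "(if x2 = h u2 then 0 else \<infinity>) \<le> ereal t2"
  moreover from this have "x1 = h u1" "x2 = h u2" "0 \<le> t1" "0 \<le> t2"
    by (auto split: if_splits)
  ultimately show "(if lcomb l x1 x2 = h (lcomb l u1 u2) then 0 else \<infinity>)
      \<le> ereal (l * t1 + (1 - l) * t2)"
    by (simp add: assms)
qed

lemma conv_comp_graph_left:
  assumes "\<And>u. length u = m \<Longrightarrow> length (h u) = n"
  shows "conv_comp m n p (conv_graph m n h) G = conv_restrict m p (\<lambda>u y. G (h u) y)"
  unfolding conv_comp_def
proof (rule conv_restrict_cong)
  fix u y :: "real list" assume "length u = m"
  then have "(INF x\<in>{x. length x = n}. conv_graph m n h u x + G x y) =
      (INF x\<in>{x. length x = n}. (if x = h u then 0 else \<infinity>) + G x y)"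
    by (intro INF_cong) (auto simp: conv_graph_def conv_restrict_def)
  also have "\<dots> = G (h u) y"
    by (rule INF_indicator_add) (use assms \<open>length u = m\<close> in auto)
  finally show "(INF x\<in>{x. length x = n}. conv_graph m n h u x + G x y) = G (h u) y" .
qed

lemma conv_comp_graph_right:
  assumes "\<And>y. length y = p \<Longrightarrow> length (k y) = n"
    and "\<And>x y. length x = n \<Longrightarrow> length y = p \<Longrightarrow> y = h x \<longleftrightarrow> x = k y"
  shows "conv_comp m n p F (conv_graph n p h) = conv_restrict m p (\<lambda>u y. F u (k y))"
  unfolding conv_comp_def
proof (rule conv_restrict_cong)
  fix u y :: "real list" assume "length y = p"
  then have "(INF x\<in>{x. length x = n}. F u x + conv_graph n p h x y) =
      (INF x\<in>{x. length x = n}. F u x + (if y = h x then 0 else \<infinity>))"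
    by (intro INF_cong) (auto simp: conv_graph_def conv_restrict_def)
  also have "\<dots> = F u (k y)"
    by (rule INF_add_indicator) (use assms \<open>length y = p\<close> in auto)
  finally show "(INF x\<in>{x. length x = n}. F u x + conv_graph n p h x y) = F u (k y)" .
qed

lemma conv_comp_graph:
  assumes "\<And>u. length u = m \<Longrightarrow> length (h u) = n"
  shows "conv_comp m n p (conv_graph m n h) (conv_graph n p k) = conv_graph m p (k \<circ> h)"
proof -
  have "conv_comp m n p (conv_graph m n h) (conv_graph n p k) =
      conv_restrict m p (\<lambda>u y. conv_graph n p k (h u) y)"
    by (rule conv_comp_graph_left[OF assms])
  also have "\<dots> = conv_graph m p (k \<circ> h)"
    unfolding conv_graph_def by (rule conv_restrict_cong) (simp add: assms conv_restrict_def)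
  finally show ?thesis .
qed

lemma conv_tensor_graph:
  assumes "\<And>u. length u = m \<Longrightarrow> length (h u) = n"
  shows "conv_tensor m n p q (conv_graph m n h) (conv_graph p q k) =
    conv_graph (m + p) (n + q) (\<lambda>w. h (take m w) @ k (drop m w))"
  unfolding conv_tensor_def conv_graph_def
proof (rule conv_restrict_cong)
  fix w v :: "real list" assume "length w = m + p" "length v = n + q"
  then show "conv_restrict m n (\<lambda>u x. if x = h u then 0 else \<infinity>) (take m w) (take n v) +
      conv_restrict p q (\<lambda>u x. if x = k u then 0 else \<infinity>) (drop m w) (drop n v) =
    (if v = h (take m w) @ k (drop m w) then 0 else \<infinity>)"
    by (auto simp: conv_restrict_def assms append_eq_conv_conj) (metis append_take_drop_id)
qed

definition list_swap :: "nat \<Rightarrow> 'a list \<Rightarrow> 'a list"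
  where "list_swap n w = drop n w @ take n w"

lemma length_list_swap [simp]: "length (list_swap n w) = length w"
  by (simp add: list_swap_def)

lemma list_swap_lcomb:
  "length u1 = length u2 \<Longrightarrow>
    list_swap n (lcomb l u1 u2) = lcomb l (list_swap n u1) (list_swap n u2)"
  by (simp add: list_swap_def take_lcomb drop_lcomb lcomb_append)

lemma list_swap_eq_iff:
  "length w = n + m \<Longrightarrow> length v = m + n \<Longrightarrow> v = list_swap n w \<longleftrightarrow> w = list_swap m v"
  by (auto simp: list_swap_def min_def)

lemma list_swap_list_swap: "length w = n + m \<Longrightarrow> list_swap m (list_swap n w) = w"
  using list_swap_eq_iff[of w n m "list_swap n w"] by simp

lemma conv_id_eq_graph: "conv_id n = conv_graph n n id"
  unfolding conv_id_def conv_graph_def by (rule conv_restrict_cong) auto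

lemma conv_sigma_eq_graph: "conv_sigma n m = conv_graph (n + m) (m + n) (list_swap n)"
  by (simp add: conv_sigma_def conv_graph_def list_swap_def)

lemma conv_id_in_hom: "conv_id n \<in> conv_hom n n"
  unfolding conv_id_eq_graph by (rule conv_graph_in_hom) simp

lemma conv_sigma_in_hom: "conv_sigma n m \<in> conv_hom (n + m) (m + n)"
  unfolding conv_sigma_eq_graph by (rule conv_graph_in_hom) (simp add: list_swap_lcomb)

lemma conv_comp_id_left: "f \<in> conv_hom a b \<Longrightarrow> conv_comp a a b (conv_id a) f = f"
  unfolding conv_id_eq_graph by (simp add: conv_comp_graph_left conv_hom_restrict)

lemma conv_comp_id_right:
  assumes "f \<in> conv_hom a b"
  shows "conv_comp a b b f (conv_id b) = f"
proof -
  have "conv_comp a b b f (conv_graph b b id) = conv_restrict a b (\<lambda>u y. f u (id y))"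
    by (rule conv_comp_graph_right) auto
  then show ?thesis
    using conv_hom_restrict[OF assms] by (simp add: conv_id_eq_graph)
qed

lemma conv_tensor_id: "conv_tensor a a c c (conv_id a) (conv_id c) = conv_id (a + c)"
proof -
  have "conv_tensor a a c c (conv_graph a a id) (conv_graph c c id) =
      conv_graph (a + c) (a + c) (\<lambda>w. id (take a w) @ id (drop a w))"
    by (rule conv_tensor_graph) simp
  also have "\<dots> = conv_graph (a + c) (a + c) id"
    by (rule conv_graph_cong) simp
  finally show ?thesis
    by (simp only: conv_id_eq_graph)
qed

lemma conv_sigma_natural:
  "conv_comp (a + b) (a' + b') (b' + a') (conv_tensor a a' b b' f g) (conv_sigma a' b') =
    conv_comp (a + b) (b + a) (b' + a') (conv_sigma a b) (conv_tensor b b' a a' g f)"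
proof -
  have "conv_comp (a + b) (a' + b') (b' + a') (conv_tensor a a' b b' f g) (conv_sigma a' b') =
      conv_restrict (a + b) (b' + a') (\<lambda>w v. conv_tensor a a' b b' f g w (list_swap b' v))"
    unfolding conv_sigma_eq_graph
    by (rule conv_comp_graph_right) (simp, metis list_swap_eq_iff)
  moreover have "conv_comp (a + b) (b + a) (b' + a') (conv_sigma a b) (conv_tensor b b' a a' g f) =
      conv_restrict (a + b) (b' + a') (\<lambda>w v. conv_tensor b b' a a' g f (list_swap a w) v)"
    unfolding conv_sigma_eq_graph by (rule conv_comp_graph_left) simp
  ultimately show ?thesis
    by (simp only:) (rule conv_restrict_cong,
        simp add: conv_tensor_def conv_restrict_def list_swap_def add.commute)
qed

lemma conv_sigma_sigma:
  "conv_comp (a + b) (b + a) (a + b) (conv_sigma a b) (conv_sigma b a) = conv_id (a + b)"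
proof -
  have "conv_comp (a + b) (b + a) (a + b) (conv_graph (a + b) (b + a) (list_swap a))
      (conv_graph (b + a) (a + b) (list_swap b)) = conv_graph (a + b) (a + b) (list_swap b \<circ> list_swap a)"
    by (rule conv_comp_graph) simp
  also have "\<dots> = conv_graph (a + b) (a + b) id"
    by (rule conv_graph_cong) (simp add: list_swap_list_swap)
  finally show ?thesis
    by (simp only: conv_sigma_eq_graph conv_id_eq_graph)
qed

lemma conv_sigma_hexagon_left:
  "conv_sigma a (b + c) =
   conv_comp (a + (b + c)) (b + (a + c)) (b + (c + a))
     (conv_tensor (a + b) (b + a) c c (conv_sigma a b) (conv_id c))
     (conv_tensor b b (a + c) (c + a) (conv_id b) (conv_sigma a c))"
proof -
  let ?s1 = "\<lambda>w. list_swap a (take (a + b) w) @ drop (a + b) w"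
  let ?s2 = "\<lambda>w. take b w @ list_swap a (drop b w)"
  have "conv_tensor (a + b) (b + a) c c (conv_sigma a b) (conv_id c) =
      conv_graph (a + (b + c)) (b + (a + c)) ?s1"
    using conv_tensor_graph[of "a + b" "list_swap a" "b + a" c c id]
    by (simp add: conv_sigma_eq_graph conv_id_eq_graph add.assoc)
  moreover have "conv_tensor b b (a + c) (c + a) (conv_id b) (conv_sigma a c) =
      conv_graph (b + (a + c)) (b + (c + a)) ?s2"
    using conv_tensor_graph[of b id b "a + c" "c + a" "list_swap a"]
    by (simp add: conv_sigma_eq_graph conv_id_eq_graph)
  moreover have "conv_comp (a + (b + c)) (b + (a + c)) (b + (c + a))
      (conv_graph (a + (b + c)) (b + (a + c)) ?s1) (conv_graph (b + (a + c)) (b + (c + a)) ?s2)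
      = conv_graph (a + (b + c)) (b + (c + a)) (?s2 \<circ> ?s1)"
    by (rule conv_comp_graph) simp
  moreover have "conv_graph (a + (b + c)) (b + (c + a)) (?s2 \<circ> ?s1) = conv_sigma a (b + c)"
    unfolding conv_sigma_eq_graph add.assoc
  proof (rule conv_graph_cong)
    fix w :: "real list" assume "length w = a + (b + c)"
    then obtain p q r where "w = p @ q @ r" "length p = a" "length q = b" "length r = c"
      using split_list3[of w a b c] by (auto simp: add.assoc)
    then show "(?s2 \<circ> ?s1) w = list_swap a w"
      by (simp add: list_swap_def)
  qed
  ultimately show ?thesis
    by simp
qed

lemma conv_sigma_hexagon_right:
  "conv_sigma (a + b) c =
   conv_comp (a + (b + c)) (a + (c + b)) (c + (a + b))
     (conv_tensor a a (b + c) (c + b) (conv_id a) (conv_sigma b c))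
     (conv_tensor (a + c) (c + a) b b (conv_sigma a c) (conv_id b))"
proof -
  let ?s1 = "\<lambda>w. take a w @ list_swap b (drop a w)"
  let ?s2 = "\<lambda>w. list_swap a (take (a + c) w) @ drop (a + c) w"
  have "conv_tensor a a (b + c) (c + b) (conv_id a) (conv_sigma b c) =
      conv_graph (a + (b + c)) (a + (c + b)) ?s1"
    using conv_tensor_graph[of a id a "b + c" "c + b" "list_swap b"]
    by (simp add: conv_sigma_eq_graph conv_id_eq_graph)
  moreover have "conv_tensor (a + c) (c + a) b b (conv_sigma a c) (conv_id b) =
      conv_graph (a + (c + b)) (c + (a + b)) ?s2"
    using conv_tensor_graph[of "a + c" "list_swap a" "c + a" b b id]
    by (simp add: conv_sigma_eq_graph conv_id_eq_graph add.assoc)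
  moreover have "conv_comp (a + (b + c)) (a + (c + b)) (c + (a + b))
      (conv_graph (a + (b + c)) (a + (c + b)) ?s1) (conv_graph (a + (c + b)) (c + (a + b)) ?s2)
      = conv_graph (a + (b + c)) (c + (a + b)) (?s2 \<circ> ?s1)"
    by (rule conv_comp_graph) simp
  moreover have "conv_graph (a + (b + c)) (c + (a + b)) (?s2 \<circ> ?s1) = conv_sigma (a + b) c"
    unfolding conv_sigma_eq_graph add.assoc
  proof (rule conv_graph_cong)
    fix w :: "real list" assume "length w = a + (b + c)"
    then obtain p q r where "w = p @ q @ r" "length p = a" "length q = b" "length r = c"
      using split_list3[of w a b c] by (auto simp: add.assoc)
    then show "(?s2 \<circ> ?s1) w = list_swap (a + b) w"
      by (simp add: list_swap_def)
  qed
  ultimately show ?thesis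
    by simp
qed

theorem mainTheorem2:
  shows "strict_sym_monoidal_cat conv_hom conv_id conv_comp (+) conv_tensor 0 conv_sigma"
  unfolding strict_sym_monoidal_cat_def
  by (intro conjI allI impI)
    (simp_all add: add.assoc
      conv_id_in_hom conv_comp_in_hom conv_comp_id_left conv_comp_id_right conv_comp_assoc
      conv_tensor_in_hom conv_tensor_id conv_tensor_comp conv_tensor_assoc conv_tensor_unit
      conv_sigma_in_hom conv_sigma_natural conv_sigma_sigma
      conv_sigma_hexagon_left conv_sigma_hexagon_right)

end
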